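(* Let $X$ be a complex Banach space, $\mathcal{F}$ a commutative algebra with unit, and $\Phi:\mathcal{F}\to\mathcal{C}(X)$ a proto-calculus. (a) If $(e_n)_n$ is a (weak) approximate identity for $f\in\mathcal{F}$ and for $g\in\mathcal{F}$, then it is a (weak) approximate identity for $f+g$ and for $\lambda f$ ($\lambda\in\mathbb{C}$), and $\overline{\Phi(f)+\Phi(g)}=\Phi(f+g)$. (b) If $(e_n)_n$ is a (strong) approximate identity for $f,g\in\mathcal{F}$, then $(e_n^2)_n$ is a strong approximate identity for $fg$, and $\overline{\Phi(f)\Phi(g)}=\Phi(fg)$.
   Context: $\mathcal{L}(X)$, $\mathcal{C}(X)$: bounded, resp. closed linear operators on $X$; operator inclusions are graph inclusions, sums/products have natural domains; $\overline{T}$ is the closure of a closable operator. A proto-calculus is a map $\Phi:\mathcal{F}\to\mathcal{C}(X)$ with (FC1) $\Phi(\mathbf{1})=I$; (FC2) $\lambda\Phi(f)\subseteq\Phi(\lambda f)$, $\Phi(f)+\Phi(g)\subseteq\Phi(f+g)$; (FC3) $\Phi(f)\Phi(g)\subseteq\Phi(fg)$, $\mathrm{dom}(\Phi(f)\Phi(g))=\mathrm{dom}(\Phi(g))\cap\mathrm{dom}(\Phi(fg))$. A sequence $(e_n)_n$ in $\mathcal{F}$ with $\Phi(e_n)\in\mathcal{L}(X)$ for all $n$ is a (strong) approximate identity if $\Phi(e_n)\to I$ strongly, and a weak approximate identity if $\Phi(e_n)\to I$ weakly. It is a (weak) approximate identity for $f\in\mathcal{F}$ if moreover $\Phi(e_n)\Phi(f)\subseteq\Phi(f)\Phi(e_n)=\Phi(fe_n)\in\mathcal{L}(X)$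 for all $n\in\mathbb{N}$. *)

theory Defs
  imports "HOL-Analysis.Analysis"
begin

text \<open>A complex Banach space is
modelled as a real Banach space (type class banach) together with a complex scalar
multiplication csmul extending the real one and compatible with the norm.\<close>

definition complex_banach :: "(complex \<Rightarrow> 'x::banach \<Rightarrow> 'x) \<Rightarrow> bool" where
  "complex_banach csmul \<longleftrightarrow>
     (\<forall>a x y. csmul a (x + y) = csmul a x + csmul a y) \<and>
     (\<forall>a b x. csmul (a + b) x = csmul a x + csmul b x) \<and>
     (\<forall>a b x. csmul a (csmul b x) = csmul (a * b) x) \<and>
     (\<forall>r x. csmul (complex_of_real r) x = r *\<^sub>R x) \<and>
     (\<forall>a x. norm (csmul a x) = cmod a * norm x)"

definition comm_calgebra :: "(complex \<Rightarrow> 'f::comm_ring_1 \<Rightarrow> 'f) \<Rightarrow> bool" where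
  "comm_calgebra smul \<longleftrightarrow>
     (\<forall>a f g. smul a (f + g) = smul a f + smul a g) \<and>
     (\<forall>a b f. smul (a + b) f = smul a f + smul b f) \<and>
     (\<forall>a b f. smul a (smul b f) = smul (a * b) f) \<and>
     (\<forall>f. smul 1 f = f) \<and>
     (\<forall>a f g. smul a (f * g) = smul a f * g)"

text \<open>A (possibly unbounded) linear operator on X is identified with its graph, a complex
linear subspace of X \<times> X which is single valued. Operator inclusion is graph
inclusion, the domain is Domain G.\<close>

definition is_op :: "(complex \<Rightarrow> 'x::banach \<Rightarrow> 'x) \<Rightarrow> ('x \<times> 'x) set \<Rightarrow> bool" where
  "is_op csmul G \<longleftrightarrow>
     (0, 0) \<in> G \<and>
     (\<forall>x y u v. (x, y) \<in> G \<longrightarrow> (u, v) \<in> G \<longrightarrow> (x + u, y + v) \<in> G) \<and>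
     (\<forall>a x y. (x, y) \<in> G \<longrightarrow> (csmul a x, csmul a y) \<in> G) \<and>
     (\<forall>x y z. (x, y) \<in> G \<longrightarrow> (x, z) \<in> G \<longrightarrow> y = z)"

definition closed_op :: "(complex \<Rightarrow> 'x::banach \<Rightarrow> 'x) \<Rightarrow> ('x \<times> 'x) set \<Rightarrow> bool" where
  "closed_op csmul G \<longleftrightarrow> is_op csmul G \<and> closed G"

definition bounded_op :: "(complex \<Rightarrow> 'x::banach \<Rightarrow> 'x) \<Rightarrow> ('x \<times> 'x) set \<Rightarrow> bool" where
  "bounded_op csmul G \<longleftrightarrow>
     (\<exists>T. G = {(x, T x) | x. True} \<and> bounded_linear T \<and>
          (\<forall>a x. T (csmul a x) = csmul a (T x)))"

definition op_app :: "('x \<times> 'x) set \<Rightarrow> 'x \<Rightarrow> 'x" where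
  "op_app G x = (THE y. (x, y) \<in> G)"

definition op_id :: "('x \<times> 'x) set" where
  "op_id = {(x, x) | x. True}"

text \<open>natural domains: sum, scalar multiple, product S T (first T, then S)\<close>
definition op_sum :: "('x::banach \<times> 'x) set \<Rightarrow> ('x \<times> 'x) set \<Rightarrow> ('x \<times> 'x) set" where
  "op_sum S T = {(x, y + z) | x y z. (x, y) \<in> S \<and> (x, z) \<in> T}"

definition op_scal :: "(complex \<Rightarrow> 'x \<Rightarrow> 'x) \<Rightarrow> complex \<Rightarrow> ('x \<times> 'x) set \<Rightarrow> ('x \<times> 'x) set" where
  "op_scal csmul a S = {(x, csmul a y) | x y. (x, y) \<in> S}"

definition op_mult :: "('x \<times> 'x) set \<Rightarrow> ('x \<times> 'x) set \<Rightarrow> ('x \<times> 'x) set" where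
  "op_mult S T = {(x, z) | x y z. (x, y) \<in> T \<and> (y, z) \<in> S}"

definition proto_calculus ::
  "(complex \<Rightarrow> 'f::comm_ring_1 \<Rightarrow> 'f) \<Rightarrow> (complex \<Rightarrow> 'x::banach \<Rightarrow> 'x) \<Rightarrow> ('f \<Rightarrow> ('x \<times> 'x) set) \<Rightarrow> bool" where
  "proto_calculus smul csmul \<Phi> \<longleftrightarrow>
     (\<forall>f. closed_op csmul (\<Phi> f)) \<and>
     \<Phi> 1 = op_id \<and>
     (\<forall>a f. op_scal csmul a (\<Phi> f) \<subseteq> \<Phi> (smul a f)) \<and>
     (\<forall>f g. op_sum (\<Phi> f) (\<Phi> g) \<subseteq> \<Phi> (f + g)) \<and>
     (\<forall>f g. op_mult (\<Phi> f) (\<Phi> g) \<subseteq> \<Phi> (f * g) \<and>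
            Domain (op_mult (\<Phi> f) (\<Phi> g)) = Domain (\<Phi> g) \<inter> Domain (\<Phi> (f * g)))"

definition cfunctional :: "(complex \<Rightarrow> 'x::banach \<Rightarrow> 'x) \<Rightarrow> ('x \<Rightarrow> complex) \<Rightarrow> bool" where
  "cfunctional csmul \<phi> \<longleftrightarrow> bounded_linear \<phi> \<and> (\<forall>a x. \<phi> (csmul a x) = a * \<phi> x)"

definition approx_identity ::
  "(complex \<Rightarrow> 'x::banach \<Rightarrow> 'x) \<Rightarrow> ('f \<Rightarrow> ('x \<times> 'x) set) \<Rightarrow> (nat \<Rightarrow> 'f) \<Rightarrow> bool" where
  "approx_identity csmul \<Phi> e \<longleftrightarrow>
     (\<forall>n. bounded_op csmul (\<Phi> (e n))) \<and>
     (\<forall>x. (\<lambda>n. op_app (\<Phi> (e n)) x) \<longlonglongrightarrow> x)"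

definition weak_approx_identity ::
  "(complex \<Rightarrow> 'x::banach \<Rightarrow> 'x) \<Rightarrow> ('f \<Rightarrow> ('x \<times> 'x) set) \<Rightarrow> (nat \<Rightarrow> 'f) \<Rightarrow> bool" where
  "weak_approx_identity csmul \<Phi> e \<longleftrightarrow>
     (\<forall>n. bounded_op csmul (\<Phi> (e n))) \<and>
     (\<forall>x \<phi>. cfunctional csmul \<phi> \<longrightarrow> (\<lambda>n. \<phi> (op_app (\<Phi> (e n)) x)) \<longlonglongrightarrow> \<phi> x)"

definition ai_commutes ::
  "(complex \<Rightarrow> 'x::banach \<Rightarrow> 'x) \<Rightarrow> ('f::comm_ring_1 \<Rightarrow> ('x \<times> 'x) set) \<Rightarrow> (nat \<Rightarrow> 'f) \<Rightarrow> 'f \<Rightarrow> bool" where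
  "ai_commutes csmul \<Phi> e f \<longleftrightarrow>
     (\<forall>n. op_mult (\<Phi> (e n)) (\<Phi> f) \<subseteq> op_mult (\<Phi> f) (\<Phi> (e n)) \<and>
          op_mult (\<Phi> f) (\<Phi> (e n)) = \<Phi> (f * e n) \<and>
          bounded_op csmul (\<Phi> (f * e n)))"

definition approx_identity_for ::
  "(complex \<Rightarrow> 'x::banach \<Rightarrow> 'x) \<Rightarrow> ('f::comm_ring_1 \<Rightarrow> ('x \<times> 'x) set) \<Rightarrow> (nat \<Rightarrow> 'f) \<Rightarrow> 'f \<Rightarrow> bool" where
  "approx_identity_for csmul \<Phi> e f \<longleftrightarrow> approx_identity csmul \<Phi> e \<and> ai_commutes csmul \<Phi> e f"

definition weak_approx_identity_for ::
  "(complex \<Rightarrow> 'x::banach \<Rightarrow> 'x) \<Rightarrow> ('f::comm_ring_1 \<Rightarrow> ('x \<times> 'x) set) \<Rightarrow> (nat \<Rightarrow> 'f) \<Rightarrow> 'f \<Rightarrow> bool" where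
  "weak_approx_identity_for csmul \<Phi> e f \<longleftrightarrow> weak_approx_identity csmul \<Phi> e \<and> ai_commutes csmul \<Phi> e f"

end

theory Submission
  imports Defs
begin

text \<open>Let \<open>E\<^sub>n = \<Phi>(e\<^sub>n)\<close>. Since \<open>E\<^sub>n\<close> commutes with \<open>\<Phi>(h)\<close>, a point
  \<open>(x, y)\<close> of the graph of \<open>\<Phi>(h)\<close> is approximated by \<open>(E\<^sub>n x, E\<^sub>n y)\<close>, which again lies
  in that graph; for \<open>h = f + g\<close> these points lie in the graph of \<open>\<Phi>(f) + \<Phi>(g)\<close>,
  because \<open>E\<^sub>n\<close> maps into the domains of \<open>\<Phi>(f)\<close> and \<open>\<Phi>(g)\<close>. For a weak approximate
  identity this gives only a weak limit, and the graph of \<open>\<Phi>(f) + \<Phi>(g)\<close> is a subspace, so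
  by Mazur's theorem (Hahn--Banach) its norm closure contains the limit. For products one uses
  \<open>E\<^sub>n\<^sup>2\<close>, which maps into the domain of \<open>\<Phi>(f)\<Phi>(g)\<close>; it converges strongly to the
  identity because the \<open>E\<^sub>n\<close> are uniformly bounded (Banach--Steinhaus).\<close>

section \<open>Hahn--Banach\<close>

text \<open>Graphs of real linear functionals of norm at most one on subspaces of \<open>V\<close>; the bound
  \<open>\<bar>r\<bar> \<le> \<parallel>v\<parallel>\<close> already forces the subspace of \<open>V \<times> \<real>\<close> to be single valued.\<close>
definition norm_dominated_graph :: "('v::real_normed_vector \<times> real) set \<Rightarrow> bool" where
  "norm_dominated_graph G \<longleftrightarrow> subspace G \<and> (\<forall>(v, r)\<in>G. \<bar>r\<bar> \<le> norm v)"

lemma norm_dominated_graph_unique: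
  assumes "norm_dominated_graph G" "(v, r) \<in> G" "(v, s) \<in> G"
  shows "r = s"
proof -
  have "(v, r) - (v, s) \<in> G"
    using assms subspace_diff unfolding norm_dominated_graph_def by blast
  then have "\<bar>r - s\<bar> \<le> 0"
    using assms(1) unfolding norm_dominated_graph_def by auto
  then show ?thesis by simp
qed

lemma norm_dominated_graph_extension_value:
  assumes G: "norm_dominated_graph G"
  shows "\<exists>c. \<forall>(u, s)\<in>G. \<bar>s + c\<bar> \<le> norm (u + x0)"
proof -
  have sub: "subspace G" and dom: "\<And>u r. (u, r) \<in> G \<Longrightarrow> \<bar>r\<bar> \<le> norm u"
    using G unfolding norm_dominated_graph_def by auto
  have gap: "r - norm (u - x0) \<le> norm (w + x0) - s" if "(u, r) \<in> G" "(w, s) \<in> G" for u r w s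
  proof -
    have "r + s \<le> norm (u + w)"
      using dom[of "u + w" "r + s"] subspace_add[OF sub that] by simp
    also have "\<dots> \<le> norm (u - x0) + norm (w + x0)"
      using norm_triangle_ineq[of "u - x0" "w + x0"] by simp
    finally show ?thesis by simp
  qed
  \<comment> \<open>Every lower bound lies below every upper bound, so their Sup is an admissible value.\<close>
  define L where "L = {r - norm (u - x0) | u r. (u, r) \<in> G}"
  have "(0, 0) \<in> G" using sub subspace_0 by (metis zero_prod_def)
  then have L: "L \<noteq> {}" "bdd_above L"
    unfolding L_def bdd_above_def using gap by blast+
  have "\<bar>s + Sup L\<bar> \<le> norm (u + x0)" if "(u, s) \<in> G" for u s
  proof -
    have "Sup L \<le> norm (u + x0) - s"
      using L(1) gap that unfolding L_def by (auto intro!: cSup_least)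
    moreover have "(- u, - s) \<in> G"
      using subspace_neg[OF sub that] by simp
    then have "- s - norm (- u - x0) \<le> Sup L"
      using L(2) unfolding L_def by (auto intro!: cSup_upper)
    then have "- s - norm (u + x0) \<le> Sup L"
      using norm_minus_cancel[of "u + x0"] by simp
    ultimately show ?thesis by linarith
  qed
  then show ?thesis by blast
qed

lemma norm_dominated_graph_span_insert:
  assumes G: "norm_dominated_graph G"
  shows "\<exists>c. norm_dominated_graph (span (insert (x0, c) G))"
proof -
  have sub: "subspace G" and dom: "\<And>u s. (u, s) \<in> G \<Longrightarrow> \<bar>s\<bar> \<le> norm u"
    using G unfolding norm_dominated_graph_def by auto
  obtain c where c: "\<And>u s. (u, s) \<in> G \<Longrightarrow> \<bar>s + c\<bar> \<le> norm (u + x0)"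
    using norm_dominated_graph_extension_value[OF G] by blast
  have "\<bar>r\<bar> \<le> norm v" if vr: "(v, r) \<in> span (insert (x0, c) G)" for v r
  proof -
    obtain k where k: "(v - k *\<^sub>R x0, r - k * c) \<in> G"
      using vr span_eq_iff[THEN iffD2, OF sub] by (auto simp: span_insert)
    show ?thesis
    proof (cases "k = 0")
      case True
      then show ?thesis using dom k by simp
    next
      case False
      have "inverse k *\<^sub>R (v - k *\<^sub>R x0, r - k * c) \<in> G"
        using subspace_scale[OF sub k] .
      then have "\<bar>inverse k * (r - k * c) + c\<bar> \<le> norm (inverse k *\<^sub>R (v - k *\<^sub>R x0) + x0)"
        by (simp add: c)
      also have "inverse k * (r - k * c) + c = inverse k * r"
        using False by (simp add: field_simps)
      also have "inverse k *\<^sub>R (v - k *\<^sub>R x0) + x0 = inverse k *\<^sub>R v"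
        using False by (simp add: algebra_simps)
      finally show ?thesis
        using False by (simp add: abs_mult field_simps)
    qed
  qed
  then show ?thesis
    unfolding norm_dominated_graph_def using subspace_span by blast
qed

lemma norm_dominated_graph_chain_Union:
  assumes "C \<noteq> {}" "subset.chain {G. norm_dominated_graph G} C"
  shows "norm_dominated_graph (\<Union>C)"
proof -
  have dom: "\<And>G. G \<in> C \<Longrightarrow> norm_dominated_graph G"
    and chain: "\<And>G H. G \<in> C \<Longrightarrow> H \<in> C \<Longrightarrow> G \<subseteq> H \<or> H \<subseteq> G"
    using assms(2) unfolding subset.chain_def by auto
  have sub: "\<And>G. G \<in> C \<Longrightarrow> subspace G"
    using dom unfolding norm_dominated_graph_def by blast
  have "subspace (\<Union>C)"
    unfolding subspace_def
  proof (intro conjI ballI allI)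
    show "0 \<in> \<Union>C" using assms(1) sub subspace_0 by blast
  next
    fix p q assume "p \<in> \<Union>C" "q \<in> \<Union>C"
    then obtain G H where GH: "G \<in> C" "H \<in> C" "p \<in> G" "q \<in> H" by blast
    show "p + q \<in> \<Union>C"
      using chain[OF GH(1,2)]
    proof
      assume "G \<subseteq> H"
      then show ?thesis using GH sub subspace_add by blast
    next
      assume "H \<subseteq> G"
      then show ?thesis using GH sub subspace_add by blast
    qed
  next
    show "a *\<^sub>R p \<in> \<Union>C" if "p \<in> \<Union>C" for a p
      using that sub subspace_scale by blast
  qed
  moreover have "\<bar>r\<bar> \<le> norm v" if "(v, r) \<in> \<Union>C" for v r
    using that dom unfolding norm_dominated_graph_def by blast
  ultimately show ?thesis unfolding norm_dominated_graph_def by blast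
qed

lemma norm_dominated_graph_total_functional:
  assumes G: "norm_dominated_graph G" and total: "Domain G = UNIV"
  shows "\<exists>\<psi>. bounded_linear \<psi> \<and> (\<forall>(v, r)\<in>G. \<psi> v = r)"
proof -
  define \<psi> where "\<psi> v = (THE r. (v, r) \<in> G)" for v
  have graph: "(v, r) \<in> G \<longleftrightarrow> r = \<psi> v" for v r
  proof -
    obtain s where "(v, s) \<in> G" using total by blast
    then have "\<exists>!r. (v, r) \<in> G" using norm_dominated_graph_unique[OF G] by blast
    then show ?thesis unfolding \<psi>_def by (metis theI')
  qed
  have sub: "subspace G"
    using G unfolding norm_dominated_graph_def by blast
  have dom: "\<bar>\<psi> v\<bar> \<le> norm v" for v
    using G graph[of v "\<psi> v"] unfolding norm_dominated_graph_def by auto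
  have "bounded_linear \<psi>"
  proof (rule bounded_linear_intro[where K = 1])
    show "\<psi> (x + y) = \<psi> x + \<psi> y" for x y
      using subspace_add[OF sub, of "(x, \<psi> x)" "(y, \<psi> y)"] graph by simp
    show "\<psi> (a *\<^sub>R x) = a *\<^sub>R \<psi> x" for a x
      using subspace_scale[OF sub, of "(x, \<psi> x)" a] graph by simp
    show "norm (\<psi> x) \<le> norm x * 1" for x
      using dom by simp
  qed
  then show ?thesis using graph by auto
qed

theorem Hahn_Banach_norm_dominated:
  assumes G0: "norm_dominated_graph G0"
  shows "\<exists>\<psi>. bounded_linear \<psi> \<and> (\<forall>(v, r)\<in>G0. \<psi> v = r)"
proof -
  define A where "A = {G. norm_dominated_graph G \<and> G0 \<subseteq> G}"
  have "\<exists>M\<in>A. \<forall>G\<in>A. M \<subseteq> G \<longrightarrow> G = M"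
  proof (rule subset_Zorn_nonempty)
    show "A \<noteq> {}" using G0 unfolding A_def by blast
    fix C assume C: "C \<noteq> {}" "subset.chain A C"
    then have "subset.chain {G. norm_dominated_graph G} C"
      unfolding subset.chain_def A_def by blast
    then have "norm_dominated_graph (\<Union>C)"
      by (rule norm_dominated_graph_chain_Union[OF C(1)])
    moreover have "G0 \<subseteq> \<Union>C"
      using C unfolding subset.chain_def A_def by blast
    ultimately show "\<Union>C \<in> A" unfolding A_def by blast
  qed
  then obtain M where M: "norm_dominated_graph M" "G0 \<subseteq> M"
    and max: "\<And>G. norm_dominated_graph G \<Longrightarrow> M \<subseteq> G \<Longrightarrow> G = M"
    unfolding A_def by (metis (no_types, lifting) mem_Collect_eq order_trans)
  have "Domain M = UNIV"
  proof (rule UNIV_eq_I[symmetric])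
    fix x
    obtain c where "norm_dominated_graph (span (insert (x, c) M))"
      using norm_dominated_graph_span_insert[OF M(1)] by blast
    moreover have ext: "insert (x, c) M \<subseteq> span (insert (x, c) M)"
      by (rule span_superset)
    ultimately have "span (insert (x, c) M) = M"
      by (intro max) auto
    then show "x \<in> Domain M"
      using ext by blast
  qed
  then obtain \<psi> where \<psi>: "bounded_linear \<psi>" "\<forall>(v, r)\<in>M. \<psi> v = r"
    using norm_dominated_graph_total_functional[OF M(1)] by blast
  show ?thesis
    using \<psi> M(2) by (intro exI[of _ \<psi>]) auto
qed

lemma separating_functional_subspace:
  fixes A :: "'v::real_normed_vector set"
  assumes A: "subspace A" and z: "z \<notin> closure A"
  shows "\<exists>\<psi>::'v \<Rightarrow> real. bounded_linear \<psi> \<and> (\<forall>a\<in>A. \<psi> a = 0) \<and> \<psi> z \<noteq> 0"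
proof -
  define d where "d = infdist z A"
  have "d > 0"
    using z subspace_0[OF A] in_closure_iff_infdist_zero[of A z] infdist_nonneg[of z A]
    unfolding d_def by force
  have sub0: "subspace (A \<times> {0::real})"
    using A unfolding subspace_def zero_prod_def by auto
  \<comment> \<open>the graph of \<open>a + t z \<mapsto> t d\<close>, of norm at most one because \<open>d\<close> is the distance of \<open>z\<close> to \<open>A\<close>\<close>
  define G0 where "G0 = span (insert (z, d) (A \<times> {0}))"
  have "\<bar>r\<bar> \<le> norm v" if vr: "(v, r) \<in> G0" for v r
  proof -
    obtain k where k: "v - k *\<^sub>R z \<in> A" "r = k * d"
      using vr span_eq_iff[THEN iffD2, OF sub0] unfolding G0_def by (auto simp: span_insert)
    show ?thesis
    proof (cases "k = 0")
      case False
      have "z - inverse k *\<^sub>R v = (- inverse k) *\<^sub>R (v - k *\<^sub>R z)"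
        using False by (simp add: algebra_simps)
      then have "z - inverse k *\<^sub>R v \<in> A"
        by (metis subspace_scale[OF A k(1)])
      then have "d \<le> dist z (z - inverse k *\<^sub>R v)"
        unfolding d_def by (rule infdist_le)
      then have "d \<le> norm v / \<bar>k\<bar>"
        by (simp add: dist_norm divide_inverse_commute)
      then show ?thesis
        using False \<open>d > 0\<close> k(2) by (simp add: abs_mult field_simps)
    qed (use k in simp)
  qed
  then have "norm_dominated_graph G0"
    unfolding norm_dominated_graph_def G0_def using subspace_span by blast
  then obtain \<psi> where \<psi>: "bounded_linear \<psi>" "\<forall>(v, r)\<in>G0. \<psi> v = r"
    using Hahn_Banach_norm_dominated by blast
  have "\<psi> a = 0" if "a \<in> A" for a
  proof -
    have "(a, 0) \<in> G0"
      using that unfolding G0_def by (intro span_base) auto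
    then show ?thesis using \<psi>(2) by auto
  qed
  moreover have "\<psi> z = d"
  proof -
    have "(z, d) \<in> G0"
      unfolding G0_def by (intro span_base) simp
    then show ?thesis using \<psi>(2) by auto
  qed
  ultimately show ?thesis
    using \<psi>(1) \<open>d > 0\<close> by auto
qed

section \<open>Uniform boundedness\<close>

lemma Baire_closed_cover:
  fixes F :: "nat \<Rightarrow> 'a::complete_space set"
  assumes closed: "\<And>k. closed (F k)" and cover: "(\<Union>k. F k) = UNIV"
  shows "\<exists>k. interior (F k) \<noteq> {}"
proof (rule ccontr)
  assume "\<not> ?thesis"
  then have "euclidean interior_of \<Union>(range F) = {}"
    using closed completely_metrizable_space_euclidean
    by (intro Baire_category_alt) (auto simp: closed_closedin[symmetric])
  then show False using cover by simp
qed

lemma bounded_linear_bound_from_ball: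
  assumes T: "bounded_linear T" and r: "r > 0"
    and ball: "\<And>y. y \<in> ball x0 r \<Longrightarrow> norm (T y) \<le> K"
  shows "norm (T x) \<le> 4 * K / r * norm x"
proof (cases "x = 0")
  case True
  then show ?thesis using linear_0[OF bounded_linear.linear[OF T]] by simp
next
  case False
  define c where "c = r / (2 * norm x)"
  have c: "c > 0" "norm (c *\<^sub>R x) = r / 2"
    using False r by (simp_all add: c_def)
  have "T (c *\<^sub>R x) = T (x0 + c *\<^sub>R x) - T x0"
    using linear_diff[OF bounded_linear.linear[OF T]] by (metis add_diff_cancel_left')
  also have "norm \<dots> \<le> norm (T (x0 + c *\<^sub>R x)) + norm (T x0)"
    by (rule norm_triangle_ineq4)
  also have "\<dots> \<le> 2 * K"
    using ball[of x0] ball[of "x0 + c *\<^sub>R x"] c r by (simp add: dist_norm)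
  finally have "c * norm (T x) \<le> 2 * K"
    using c linear_scale[OF bounded_linear.linear[OF T]] by simp
  then have "norm (T x) \<le> 2 * K / c"
    using c(1) by (simp add: pos_le_divide_eq mult.commute)
  also have "2 * K / c = 4 * K / r * norm x"
    using r False by (simp add: c_def)
  finally show ?thesis .
qed

theorem uniform_boundedness:
  fixes E :: "nat \<Rightarrow> 'v::banach \<Rightarrow> 'w::real_normed_vector"
  assumes E: "\<And>n. bounded_linear (E n)"
    and pointwise: "\<And>x. bounded (range (\<lambda>n. E n x))"
  shows "\<exists>B. \<forall>n x. norm (E n x) \<le> B * norm x"
proof -
  define F where "F k = (\<Inter>n. {x. norm (E n x) \<le> real k})" for k
  have "closed (F k)" for k
    unfolding F_def
    by (intro closed_INT ballI closed_Collect_le continuous_intros linear_continuous_on E)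
  moreover have "(\<Union>k. F k) = UNIV"
  proof (rule UNIV_eq_I[symmetric])
    fix x
    obtain B where B: "\<And>n. norm (E n x) \<le> B"
      using pointwise[of x] unfolding bounded_iff by blast
    have "norm (E n x) \<le> real (nat \<lceil>B\<rceil>)" for n
      using B[of n] by linarith
    then have "x \<in> F (nat \<lceil>B\<rceil>)"
      unfolding F_def by blast
    then show "x \<in> (\<Union>k. F k)" by blast
  qed
  ultimately obtain k x0 where "x0 \<in> interior (F k)"
    using Baire_closed_cover by blast
  then obtain r where r: "r > 0" "ball x0 r \<subseteq> F k"
    using mem_interior by blast
  then have "norm (E n y) \<le> real k" if "y \<in> ball x0 r" for n y
    using that unfolding F_def by blast
  then have "norm (E n x) \<le> 4 * real k / r * norm x" for n x
    using bounded_linear_bound_from_ball[OF E r(1)] by blast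
  then show ?thesis by blast
qed

lemma tendsto_comp_strong_identity:
  fixes E F :: "nat \<Rightarrow> 'v::banach \<Rightarrow> 'v"
  assumes E: "\<And>n. bounded_linear (E n)"
    and E_lim: "\<And>x. (\<lambda>n. E n x) \<longlonglongrightarrow> x" and F_lim: "\<And>x. (\<lambda>n. F n x) \<longlonglongrightarrow> x"
  shows "(\<lambda>n. E n (F n x)) \<longlonglongrightarrow> x"
proof -
  have "bounded (range (\<lambda>n. E n y))" for y
    using E_lim[of y] by (metis Bseq_eq_bounded convergentI convergent_imp_Bseq)
  then obtain B where B: "\<And>n y. norm (E n y) \<le> B * norm y"
    using uniform_boundedness[of E, OF E] by blast
  define g where "g n = norm (E n x - x) + B * norm (F n x - x)" for n
  have bound: "\<forall>n. norm (E n (F n x) - x) \<le> g n"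
  proof
    fix n
    have "E n (F n x) - x = E n (F n x - x) + (E n x - x)"
      using linear_diff[OF bounded_linear.linear[OF E]] by simp
    then have "norm (E n (F n x) - x) \<le> norm (E n (F n x - x)) + norm (E n x - x)"
      by (metis norm_triangle_ineq)
    then show "norm (E n (F n x) - x) \<le> g n"
      using B[of n "F n x - x"] unfolding g_def by linarith
  qed
  have "g \<longlonglongrightarrow> 0 + B * 0"
    unfolding g_def using E_lim[of x] F_lim[of x]
    by (intro tendsto_add tendsto_mult tendsto_const tendsto_norm_zero LIM_zero)
  then have "(\<lambda>n. E n (F n x) - x) \<longlonglongrightarrow> 0"
    using Lim_null_comparison[OF always_eventually[OF bound]] by simp
  then show ?thesis by (rule LIM_zero_cancel)
qed

section \<open>Complex Banach spaces\<close>

lemma complex_banachD: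
  assumes "complex_banach csmul"
  shows "\<And>a x y. csmul a (x + y) = csmul a x + csmul a y"
    "\<And>a b x. csmul (a + b) x = csmul a x + csmul b x"
    "\<And>a b x. csmul a (csmul b x) = csmul (a * b) x"
    "\<And>r x. csmul (complex_of_real r) x = r *\<^sub>R x"
    "\<And>a x. norm (csmul a x) = cmod a * norm x"
  using assms unfolding complex_banach_def by blast+

lemma complex_banach_csmul_scaleR:
  assumes X: "complex_banach csmul"
  shows "csmul a (r *\<^sub>R x) = r *\<^sub>R csmul a x"
  by (metis X complex_banachD(3,4) mult.commute)

lemma complex_banach_bounded_linear_csmul:
  assumes X: "complex_banach csmul"
  shows "bounded_linear (csmul a)"
  by (rule bounded_linear_intro[where K = "cmod a"])
     (auto simp: complex_banachD[OF X] complex_banach_csmul_scaleR[OF X] mult.commute)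

lemma complex_banach_csmul_Re_Im:
  assumes X: "complex_banach csmul"
  shows "csmul a x = Re a *\<^sub>R x + Im a *\<^sub>R csmul \<i> x"
proof -
  have "a = complex_of_real (Re a) + complex_of_real (Im a) * \<i>"
    by (simp add: complex_eq_iff)
  then have "csmul a x = Re a *\<^sub>R x + csmul (complex_of_real (Im a)) (csmul \<i> x)"
    by (metis X complex_banachD(2,3,4))
  then show ?thesis
    by (simp add: complex_banachD(4)[OF X])
qed

lemma complex_banach_csmul_ii_ii:
  assumes X: "complex_banach csmul"
  shows "csmul \<i> (csmul \<i> x) = - x"
proof -
  have "csmul \<i> (csmul \<i> x) = csmul (complex_of_real (- 1)) x"
    by (simp add: complex_banachD(3)[OF X])
  also have "\<dots> = - x"
    using complex_banachD(4)[OF X, of "- 1" x] by simp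
  finally show ?thesis .
qed

text \<open>A complex-linear functional is determined by its real part \<open>\<psi>\<close> through
  \<open>\<phi> x = \<psi> x - \<i> \<psi> (\<i> x)\<close>; conversely this formula complexifies any real functional.\<close>
lemma cfunctional_complexification:
  assumes X: "complex_banach csmul" and \<psi>: "bounded_linear (\<psi> :: 'x::banach \<Rightarrow> real)"
  shows "cfunctional csmul (\<lambda>x. Complex (\<psi> x) (- \<psi> (csmul \<i> x)))"
proof -
  interpret \<psi>: bounded_linear \<psi> by (rule \<psi>)
  obtain K where K: "\<And>x. norm (\<psi> x) \<le> norm x * K"
    using \<psi>.bounded by blast
  have "bounded_linear (\<lambda>x. Complex (\<psi> x) (- \<psi> (csmul \<i> x)))"
  proof (rule bounded_linear_intro[where K = "2 * K"])
    show "Complex (\<psi> (x + y)) (- \<psi> (csmul \<i> (x + y))) =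
          Complex (\<psi> x) (- \<psi> (csmul \<i> x)) + Complex (\<psi> y) (- \<psi> (csmul \<i> y))" for x y
      by (simp add: complex_eq_iff complex_banachD(1)[OF X] \<psi>.add)
    show "Complex (\<psi> (r *\<^sub>R x)) (- \<psi> (csmul \<i> (r *\<^sub>R x))) =
          r *\<^sub>R Complex (\<psi> x) (- \<psi> (csmul \<i> x))" for r x
      by (simp add: complex_eq_iff complex_banach_csmul_scaleR[OF X] \<psi>.scaleR)
    show "norm (Complex (\<psi> x) (- \<psi> (csmul \<i> x))) \<le> norm x * (2 * K)" for x
    proof -
      have "norm (Complex (\<psi> x) (- \<psi> (csmul \<i> x))) \<le> \<bar>\<psi> x\<bar> + \<bar>\<psi> (csmul \<i> x)\<bar>"
        using cmod_le[of "Complex (\<psi> x) (- \<psi> (csmul \<i> x))"] by simp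
      also have "\<dots> \<le> norm x * K + norm (csmul \<i> x) * K"
        using K[of x] K[of "csmul \<i> x"] by simp
      also have "norm (csmul \<i> x) = norm x"
        by (simp add: complex_banachD(5)[OF X])
      finally show ?thesis by (simp add: algebra_simps)
    qed
  qed
  moreover have "Complex (\<psi> (csmul a x)) (- \<psi> (csmul \<i> (csmul a x))) =
      a * Complex (\<psi> x) (- \<psi> (csmul \<i> x))" for a x
  proof -
    have ax: "csmul a x = Re a *\<^sub>R x + Im a *\<^sub>R csmul \<i> x"
      by (rule complex_banach_csmul_Re_Im[OF X])
    have iax: "csmul \<i> (csmul a x) = Re a *\<^sub>R csmul \<i> x - Im a *\<^sub>R x"
      by (simp add: ax complex_banachD(1)[OF X] complex_banach_csmul_scaleR[OF X]
          complex_banach_csmul_ii_ii[OF X])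
    show ?thesis
      unfolding iax by (simp add: ax complex_eq_iff \<psi>.add \<psi>.diff \<psi>.scaleR)
  qed
  ultimately show ?thesis unfolding cfunctional_def by blast
qed

text \<open>Mazur's theorem. Testing weak convergence against complex-linear functionals suffices,
  since every real functional is the real part of its complexification.\<close>
lemma weak_limit_in_closure_subspace:
  fixes A :: "('x::banach \<times> 'x) set"
  assumes X: "complex_banach csmul" and A: "subspace A"
    and in_A: "\<And>n. (xs n, ys n) \<in> A"
    and xs: "\<And>\<phi>. cfunctional csmul \<phi> \<Longrightarrow> (\<lambda>n. \<phi> (xs n)) \<longlonglongrightarrow> \<phi> x"
    and ys: "\<And>\<phi>. cfunctional csmul \<phi> \<Longrightarrow> (\<lambda>n. \<phi> (ys n)) \<longlonglongrightarrow> \<phi> y"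
  shows "(x, y) \<in> closure A"
proof (rule ccontr)
  assume "(x, y) \<notin> closure A"
  then obtain \<psi> :: "'x \<times> 'x \<Rightarrow> real" where \<psi>: "bounded_linear \<psi>"
    and A0: "\<forall>a\<in>A. \<psi> a = 0" and xy: "\<psi> (x, y) \<noteq> 0"
    using separating_functional_subspace[OF A] by blast
  define \<psi>1 where "\<psi>1 u = \<psi> (u, 0)" for u
  define \<psi>2 where "\<psi>2 u = \<psi> (0, u)" for u
  have \<psi>1: "bounded_linear \<psi>1" and \<psi>2: "bounded_linear \<psi>2"
    unfolding \<psi>1_def \<psi>2_def
    by (auto intro!: bounded_linear_compose[OF \<psi>] bounded_linear_intros)
  have split: "\<psi> (u, v) = \<psi>1 u + \<psi>2 v" for u v
    using linear_add[OF bounded_linear.linear[OF \<psi>], of "(u, 0)" "(0, v)"]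
    by (simp add: \<psi>1_def \<psi>2_def)
  have "(\<lambda>n. \<psi>1 (xs n)) \<longlonglongrightarrow> \<psi>1 x"
    using tendsto_Re[OF xs[OF cfunctional_complexification[OF X \<psi>1]]] by simp
  moreover have "(\<lambda>n. \<psi>2 (ys n)) \<longlonglongrightarrow> \<psi>2 y"
    using tendsto_Re[OF ys[OF cfunctional_complexification[OF X \<psi>2]]] by simp
  ultimately have "(\<lambda>n. \<psi> (xs n, ys n)) \<longlonglongrightarrow> \<psi> (x, y)"
    unfolding split by (rule tendsto_add)
  moreover have "(\<lambda>n. \<psi> (xs n, ys n)) = (\<lambda>n. 0)"
    using A0 in_A by auto
  ultimately have "\<psi> (x, y) = 0"
    using LIMSEQ_unique tendsto_const by metis
  with xy show False by simp
qed

section \<open>Operators and proto-calculi\<close>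

lemma bounded_op_graph_iff:
  assumes "bounded_op csmul G"
  shows "(x, y) \<in> G \<longleftrightarrow> y = op_app G x"
  using assms unfolding bounded_op_def op_app_def by auto

lemma bounded_op_Domain:
  assumes "bounded_op csmul G"
  shows "Domain G = UNIV"
  using bounded_op_graph_iff[OF assms] by blast

lemma bounded_op_app:
  assumes "bounded_op csmul G"
  shows "bounded_linear (op_app G)" "op_app G (csmul a x) = csmul a (op_app G x)"
proof -
  obtain T where T: "G = {(x, T x) | x. True}" "bounded_linear T"
    "\<And>a x. T (csmul a x) = csmul a (T x)"
    using assms unfolding bounded_op_def by blast
  then have "op_app G = T"
    unfolding op_app_def by auto
  then show "bounded_linear (op_app G)" "op_app G (csmul a x) = csmul a (op_app G x)"
    using T by simp_all
qed

lemma Domain_op_sum: "Domain (op_sum S T) = Domain S \<inter> Domain T"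
  unfolding op_sum_def by force

lemma bounded_opI:
  assumes "bounded_linear T" "\<And>a x. T (csmul a x) = csmul a (T x)"
    and "\<And>x y. (x, y) \<in> G \<longleftrightarrow> y = T x"
  shows "bounded_op csmul G"
  unfolding bounded_op_def using assms by (intro exI[of _ T]) auto

lemma bounded_op_sum:
  assumes X: "complex_banach csmul" and S: "bounded_op csmul S" and T: "bounded_op csmul T"
  shows "bounded_op csmul (op_sum S T)"
proof (rule bounded_opI[where T = "\<lambda>x. op_app S x + op_app T x"])
  show "bounded_linear (\<lambda>x. op_app S x + op_app T x)"
    using bounded_op_app(1)[OF S] bounded_op_app(1)[OF T] by (rule bounded_linear_add)
  show "op_app S (csmul a x) + op_app T (csmul a x) = csmul a (op_app S x + op_app T x)" for a x
    by (simp add: bounded_op_app(2)[OF S] bounded_op_app(2)[OF T] complex_banachD(1)[OF X])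
  show "(x, y) \<in> op_sum S T \<longleftrightarrow> y = op_app S x + op_app T x" for x y
    unfolding op_sum_def by (auto simp: bounded_op_graph_iff[OF S] bounded_op_graph_iff[OF T])
qed

lemma bounded_op_scal:
  assumes X: "complex_banach csmul" and S: "bounded_op csmul S"
  shows "bounded_op csmul (op_scal csmul a S)"
proof (rule bounded_opI[where T = "\<lambda>x. csmul a (op_app S x)"])
  show "bounded_linear (\<lambda>x. csmul a (op_app S x))"
    using complex_banach_bounded_linear_csmul[OF X] bounded_op_app(1)[OF S]
    by (rule bounded_linear_compose)
  show "csmul a (op_app S (csmul b x)) = csmul b (csmul a (op_app S x))" for b x
    by (simp add: bounded_op_app(2)[OF S] complex_banachD(3)[OF X] mult.commute)
  show "(x, y) \<in> op_scal csmul a S \<longleftrightarrow> y = csmul a (op_app S x)" for x y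
    unfolding op_scal_def by (auto simp: bounded_op_graph_iff[OF S])
qed

lemma bounded_op_mult:
  assumes S: "bounded_op csmul S" and T: "bounded_op csmul T"
  shows "bounded_op csmul (op_mult S T)"
proof (rule bounded_opI[where T = "\<lambda>x. op_app S (op_app T x)"])
  show "bounded_linear (\<lambda>x. op_app S (op_app T x))"
    using bounded_op_app(1)[OF S] bounded_op_app(1)[OF T] by (rule bounded_linear_compose)
  show "op_app S (op_app T (csmul a x)) = csmul a (op_app S (op_app T x))" for a x
    by (simp add: bounded_op_app(2)[OF S] bounded_op_app(2)[OF T])
  show "(x, y) \<in> op_mult S T \<longleftrightarrow> y = op_app S (op_app T x)" for x y
    unfolding op_mult_def by (auto simp: bounded_op_graph_iff[OF S] bounded_op_graph_iff[OF T])
qed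

lemma single_valued_graph_eqI:
  assumes "\<And>x y z. (x, y) \<in> H \<Longrightarrow> (x, z) \<in> H \<Longrightarrow> y = z"
    and "G \<subseteq> H" "Domain H \<subseteq> Domain G"
  shows "G = H"
  using assms by fast

lemma approx_identity_imp_weak:
  assumes "approx_identity csmul \<Phi> e"
  shows "weak_approx_identity csmul \<Phi> e"
  using assms unfolding approx_identity_def weak_approx_identity_def cfunctional_def
  by (auto intro: bounded_linear.tendsto)

locale proto_calc =
  fixes csmul :: "complex \<Rightarrow> 'x::banach \<Rightarrow> 'x"
    and smul :: "complex \<Rightarrow> 'f::comm_ring_1 \<Rightarrow> 'f"
    and \<Phi> :: "'f \<Rightarrow> ('x \<times> 'x) set"
  assumes X: "complex_banach csmul"
    and F: "comm_calgebra smul"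
    and PC: "proto_calculus smul csmul \<Phi>"
begin

lemma Phi_is_op: "is_op csmul (\<Phi> f)" and Phi_closed: "closed (\<Phi> f)"
  using PC unfolding proto_calculus_def closed_op_def by auto

lemma Phi_single_valued: "(x, y) \<in> \<Phi> f \<Longrightarrow> (x, z) \<in> \<Phi> f \<Longrightarrow> y = z"
  and Phi_zero: "(0, 0) \<in> \<Phi> f"
  and Phi_add: "(x, y) \<in> \<Phi> f \<Longrightarrow> (u, v) \<in> \<Phi> f \<Longrightarrow> (x + u, y + v) \<in> \<Phi> f"
  and Phi_csmul: "(x, y) \<in> \<Phi> f \<Longrightarrow> (csmul a x, csmul a y) \<in> \<Phi> f"
  using Phi_is_op unfolding is_op_def by blast+

lemma Phi_scal: "op_scal csmul a (\<Phi> f) \<subseteq> \<Phi> (smul a f)"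
  and Phi_sum: "op_sum (\<Phi> f) (\<Phi> g) \<subseteq> \<Phi> (f + g)"
  and Phi_mult: "op_mult (\<Phi> f) (\<Phi> g) \<subseteq> \<Phi> (f * g)"
  and Domain_Phi_mult: "Domain (op_mult (\<Phi> f) (\<Phi> g)) = Domain (\<Phi> g) \<inter> Domain (\<Phi> (f * g))"
  using PC unfolding proto_calculus_def by blast+

lemma smul_mult_left: "smul a (f * g) = smul a f * g"
  using F unfolding comm_calgebra_def by blast

lemma Phi_eq_bounded_op:
  assumes "bounded_op csmul G" "G \<subseteq> \<Phi> h"
  shows "\<Phi> h = G"
proof (rule sym, rule single_valued_graph_eqI[OF Phi_single_valued assms(2)])
  show "Domain (\<Phi> h) \<subseteq> Domain G"
    using bounded_op_Domain[OF assms(1)] by simp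
qed

lemma subspace_op_sum: "subspace (op_sum (\<Phi> f) (\<Phi> g))"
  unfolding subspace_def
proof (intro conjI ballI allI)
  show "0 \<in> op_sum (\<Phi> f) (\<Phi> g)"
    unfolding op_sum_def zero_prod_def using Phi_zero by force
next
  fix p q assume "p \<in> op_sum (\<Phi> f) (\<Phi> g)" "q \<in> op_sum (\<Phi> f) (\<Phi> g)"
  then obtain x1 y1 z1 x2 y2 z2 where "p = (x1, y1 + z1)" "(x1, y1) \<in> \<Phi> f" "(x1, z1) \<in> \<Phi> g"
    "q = (x2, y2 + z2)" "(x2, y2) \<in> \<Phi> f" "(x2, z2) \<in> \<Phi> g"
    unfolding op_sum_def by blast
  then show "p + q \<in> op_sum (\<Phi> f) (\<Phi> g)"
    unfolding op_sum_def
    by (intro CollectI exI[of _ "x1 + x2"] exI[of _ "y1 + y2"] exI[of _ "z1 + z2"])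
       (auto simp: Phi_add algebra_simps)
next
  fix c p assume "p \<in> op_sum (\<Phi> f) (\<Phi> g)"
  then obtain x y z where "p = (x, y + z)" "(x, y) \<in> \<Phi> f" "(x, z) \<in> \<Phi> g"
    unfolding op_sum_def by blast
  moreover have "c *\<^sub>R u = csmul (complex_of_real c) u" for u
    by (simp add: complex_banachD(4)[OF X])
  ultimately show "c *\<^sub>R p \<in> op_sum (\<Phi> f) (\<Phi> g)"
    unfolding op_sum_def
    by (intro CollectI exI[of _ "c *\<^sub>R x"] exI[of _ "c *\<^sub>R y"] exI[of _ "c *\<^sub>R z"])
       (auto simp: Phi_csmul scaleR_right_distrib)
qed

lemma Phi_subset_mem:
  assumes "S \<subseteq> \<Phi> h" "x \<in> Domain S" "(x, y) \<in> \<Phi> h"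
  shows "(x, y) \<in> S"
  using assms Phi_single_valued by blast

lemma Phi_mult_bounded_op:
  assumes "bounded_op csmul (\<Phi> f)" "bounded_op csmul (\<Phi> g)"
  shows "\<Phi> (f * g) = op_mult (\<Phi> f) (\<Phi> g)" "bounded_op csmul (\<Phi> (f * g))"
proof -
  show eq: "\<Phi> (f * g) = op_mult (\<Phi> f) (\<Phi> g)"
    using Phi_eq_bounded_op[OF bounded_op_mult[OF assms] Phi_mult] .
  show "bounded_op csmul (\<Phi> (f * g))"
    unfolding eq using bounded_op_mult[OF assms] .
qed

lemma op_app_Phi_mult:
  assumes f: "bounded_op csmul (\<Phi> f)" and g: "bounded_op csmul (\<Phi> g)"
  shows "op_app (\<Phi> (f * g)) x = op_app (\<Phi> f) (op_app (\<Phi> g) x)"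
proof -
  have "(x, op_app (\<Phi> f) (op_app (\<Phi> g) x)) \<in> op_mult (\<Phi> f) (\<Phi> g)"
    unfolding op_mult_def by (auto simp: bounded_op_graph_iff[OF f] bounded_op_graph_iff[OF g])
  then show ?thesis
    unfolding Phi_mult_bounded_op(1)[OF f g, symmetric]
    by (simp add: bounded_op_graph_iff[OF Phi_mult_bounded_op(2)[OF f g]])
qed

lemma Phi_add_mult_bounded_op:
  assumes "bounded_op csmul (\<Phi> (f * e))" "bounded_op csmul (\<Phi> (g * e))"
  shows "bounded_op csmul (\<Phi> ((f + g) * e))"
proof -
  have "op_sum (\<Phi> (f * e)) (\<Phi> (g * e)) \<subseteq> \<Phi> ((f + g) * e)"
    using Phi_sum[of "f * e" "g * e"] by (simp add: distrib_right)
  then show ?thesis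
    using Phi_eq_bounded_op bounded_op_sum[OF X assms] by metis
qed

lemma Phi_smul_mult_bounded_op:
  assumes "bounded_op csmul (\<Phi> (f * e))"
  shows "bounded_op csmul (\<Phi> (smul a f * e))"
proof -
  have "op_scal csmul a (\<Phi> (f * e)) \<subseteq> \<Phi> (smul a f * e)"
    using Phi_scal[of a "f * e"] by (simp add: smul_mult_left)
  then show ?thesis
    using Phi_eq_bounded_op bounded_op_scal[OF X assms] by metis
qed

text \<open>For bounded \<open>\<Phi> (e n)\<close> the commutation conditions are automatic in a proto-calculus;
  only the boundedness of \<open>\<Phi> (h * e n)\<close> is a genuine requirement.\<close>
lemma ai_commutes_iff:
  assumes e: "\<And>n. bounded_op csmul (\<Phi> (e n))"
  shows "ai_commutes csmul \<Phi> e h \<longleftrightarrow> (\<forall>n. bounded_op csmul (\<Phi> (h * e n)))"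
proof
  assume "\<forall>n. bounded_op csmul (\<Phi> (h * e n))"
  then have he: "bounded_op csmul (\<Phi> (h * e n))" for n by blast
  have eq: "op_mult (\<Phi> h) (\<Phi> (e n)) = \<Phi> (h * e n)" for n
  proof (rule single_valued_graph_eqI[OF Phi_single_valued Phi_mult])
    show "Domain (\<Phi> (h * e n)) \<subseteq> Domain (op_mult (\<Phi> h) (\<Phi> (e n)))"
      unfolding Domain_Phi_mult bounded_op_Domain[OF e] bounded_op_Domain[OF he] by simp
  qed
  moreover have "op_mult (\<Phi> (e n)) (\<Phi> h) \<subseteq> \<Phi> (h * e n)" for n
    using Phi_mult[of "e n" h] by (simp add: mult.commute)
  ultimately show "ai_commutes csmul \<Phi> e h"
    unfolding ai_commutes_def using he by simp
qed (simp add: ai_commutes_def)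

lemma ai_commutes_graph:
  assumes ai: "ai_commutes csmul \<Phi> e h" and e: "bounded_op csmul (\<Phi> (e n))"
    and xy: "(x, y) \<in> \<Phi> h"
  shows "(op_app (\<Phi> (e n)) x, op_app (\<Phi> (e n)) y) \<in> \<Phi> h"
proof -
  have "(x, op_app (\<Phi> (e n)) y) \<in> op_mult (\<Phi> (e n)) (\<Phi> h)"
    unfolding op_mult_def using xy bounded_op_graph_iff[OF e] by blast
  then have "(x, op_app (\<Phi> (e n)) y) \<in> op_mult (\<Phi> h) (\<Phi> (e n))"
    using ai unfolding ai_commutes_def by blast
  then show ?thesis
    unfolding op_mult_def by (auto simp: bounded_op_graph_iff[OF e])
qed

lemma ai_commutes_Domain:
  assumes ai: "ai_commutes csmul \<Phi> e h" and e: "bounded_op csmul (\<Phi> (e n))"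
  shows "op_app (\<Phi> (e n)) x \<in> Domain (\<Phi> h)"
proof -
  have "x \<in> Domain (op_mult (\<Phi> h) (\<Phi> (e n)))"
    using ai bounded_op_Domain unfolding ai_commutes_def by (metis UNIV_I)
  then show ?thesis
    unfolding op_mult_def by (auto simp: bounded_op_graph_iff[OF e])
qed

lemma ai_commutes_add:
  assumes e: "\<And>n. bounded_op csmul (\<Phi> (e n))"
    and "ai_commutes csmul \<Phi> e f" "ai_commutes csmul \<Phi> e g"
  shows "ai_commutes csmul \<Phi> e (f + g)"
  using assms Phi_add_mult_bounded_op by (simp add: ai_commutes_iff[OF e])

lemma ai_commutes_smul:
  assumes e: "\<And>n. bounded_op csmul (\<Phi> (e n))"
    and "ai_commutes csmul \<Phi> e f"
  shows "ai_commutes csmul \<Phi> e (smul a f)"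
  using assms Phi_smul_mult_bounded_op by (simp add: ai_commutes_iff[OF e])

lemma ai_commutes_square:
  assumes e: "\<And>n. bounded_op csmul (\<Phi> (e n))"
    and f: "ai_commutes csmul \<Phi> e f" and g: "ai_commutes csmul \<Phi> e g"
  shows "ai_commutes csmul \<Phi> (\<lambda>n. e n * e n) (f * g)"
proof -
  have e2: "bounded_op csmul (\<Phi> (e n * e n))" for n
    using Phi_mult_bounded_op(2)[OF e e] .
  have "bounded_op csmul (\<Phi> ((f * e n) * (g * e n)))" for n
    by (rule Phi_mult_bounded_op(2)) (use f g e in \<open>simp_all add: ai_commutes_iff\<close>)
  then show ?thesis
    unfolding ai_commutes_iff[OF e2] by (simp add: ac_simps)
qed

lemma closure_op_sum:
  assumes "weak_approx_identity_for csmul \<Phi> e f" "weak_approx_identity_for csmul \<Phi> e g"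
  shows "closure (op_sum (\<Phi> f) (\<Phi> g)) = \<Phi> (f + g)"
proof
  show "closure (op_sum (\<Phi> f) (\<Phi> g)) \<subseteq> \<Phi> (f + g)"
    by (rule closure_minimal[OF Phi_sum Phi_closed])
next
  have w: "weak_approx_identity csmul \<Phi> e"
    and f: "ai_commutes csmul \<Phi> e f" and g: "ai_commutes csmul \<Phi> e g"
    using assms unfolding weak_approx_identity_for_def by blast+
  have e: "\<And>n. bounded_op csmul (\<Phi> (e n))"
    and lim: "\<And>x \<phi>. cfunctional csmul \<phi> \<Longrightarrow> (\<lambda>n. \<phi> (op_app (\<Phi> (e n)) x)) \<longlonglongrightarrow> \<phi> x"
    using w unfolding weak_approx_identity_def by blast+
  have fg: "ai_commutes csmul \<Phi> e (f + g)"
    by (rule ai_commutes_add[OF e f g])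
  show "\<Phi> (f + g) \<subseteq> closure (op_sum (\<Phi> f) (\<Phi> g))"
  proof (clarify)
    fix x y assume xy: "(x, y) \<in> \<Phi> (f + g)"
    have "(op_app (\<Phi> (e n)) x, op_app (\<Phi> (e n)) y) \<in> op_sum (\<Phi> f) (\<Phi> g)" for n
    proof (rule Phi_subset_mem[OF Phi_sum])
      show "op_app (\<Phi> (e n)) x \<in> Domain (op_sum (\<Phi> f) (\<Phi> g))"
        unfolding Domain_op_sum using ai_commutes_Domain[OF f e] ai_commutes_Domain[OF g e] by blast
      show "(op_app (\<Phi> (e n)) x, op_app (\<Phi> (e n)) y) \<in> \<Phi> (f + g)"
        by (rule ai_commutes_graph[OF fg e xy])
    qed
    then show "(x, y) \<in> closure (op_sum (\<Phi> f) (\<Phi> g))"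
      by (rule weak_limit_in_closure_subspace[OF X subspace_op_sum _ lim lim])
  qed
qed

lemma approx_identity_square:
  assumes ai: "approx_identity csmul \<Phi> e"
  shows "approx_identity csmul \<Phi> (\<lambda>n. e n * e n)"
proof -
  have e: "\<And>n. bounded_op csmul (\<Phi> (e n))"
    and lim: "\<And>x. (\<lambda>n. op_app (\<Phi> (e n)) x) \<longlonglongrightarrow> x"
    using ai unfolding approx_identity_def by blast+
  have e2: "bounded_op csmul (\<Phi> (e n * e n))" for n
    using Phi_mult_bounded_op(2)[OF e e] .
  have "op_app (\<Phi> (e n * e n)) x = op_app (\<Phi> (e n)) (op_app (\<Phi> (e n)) x)" for n x
    by (rule op_app_Phi_mult[OF e e])
  moreover have "(\<lambda>n. op_app (\<Phi> (e n)) (op_app (\<Phi> (e n)) x)) \<longlonglongrightarrow> x" for x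
    by (rule tendsto_comp_strong_identity[OF bounded_op_app(1)[OF e] lim lim])
  ultimately show ?thesis
    unfolding approx_identity_def using e2 by simp
qed

lemma closure_op_mult:
  assumes "approx_identity_for csmul \<Phi> e f" "approx_identity_for csmul \<Phi> e g"
  shows "closure (op_mult (\<Phi> f) (\<Phi> g)) = \<Phi> (f * g)"
proof
  show "closure (op_mult (\<Phi> f) (\<Phi> g)) \<subseteq> \<Phi> (f * g)"
    by (rule closure_minimal[OF Phi_mult Phi_closed])
next
  have ai: "approx_identity csmul \<Phi> e"
    and f: "ai_commutes csmul \<Phi> e f" and g: "ai_commutes csmul \<Phi> e g"
    using assms unfolding approx_identity_for_def by blast+
  have e: "\<And>n. bounded_op csmul (\<Phi> (e n))"
    using ai unfolding approx_identity_def by blast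
  have e2: "\<And>n. bounded_op csmul (\<Phi> (e n * e n))"
    and lim: "\<And>x. (\<lambda>n. op_app (\<Phi> (e n * e n)) x) \<longlonglongrightarrow> x"
    using approx_identity_square[OF ai] unfolding approx_identity_def by blast+
  have fg: "ai_commutes csmul \<Phi> (\<lambda>n. e n * e n) (f * g)"
    by (rule ai_commutes_square[OF e f g])
  have sq: "op_app (\<Phi> (e n * e n)) x = op_app (\<Phi> (e n)) (op_app (\<Phi> (e n)) x)" for n x
    by (rule op_app_Phi_mult[OF e e])
  show "\<Phi> (f * g) \<subseteq> closure (op_mult (\<Phi> f) (\<Phi> g))"
  proof (clarify)
    fix x y assume xy: "(x, y) \<in> \<Phi> (f * g)"
    let ?s = "\<lambda>n. (op_app (\<Phi> (e n * e n)) x, op_app (\<Phi> (e n * e n)) y)"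
    have "?s n \<in> op_mult (\<Phi> f) (\<Phi> g)" for n
    proof (rule Phi_subset_mem[OF Phi_mult])
      show s: "?s n \<in> \<Phi> (f * g)"
        using ai_commutes_graph[OF fg e2 xy] by simp
      have "op_app (\<Phi> (e n * e n)) x \<in> Domain (\<Phi> g)"
        unfolding sq by (rule ai_commutes_Domain[OF g e])
      with s show "op_app (\<Phi> (e n * e n)) x \<in> Domain (op_mult (\<Phi> f) (\<Phi> g))"
        unfolding Domain_Phi_mult by blast
    qed
    moreover have "?s \<longlonglongrightarrow> (x, y)"
      by (intro tendsto_Pair lim)
    ultimately show "(x, y) \<in> closure (op_mult (\<Phi> f) (\<Phi> g))"
      unfolding closure_sequential by (intro exI[of _ ?s]) simp
  qed
qed


lemma weak_approx_identity_for_add: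
  assumes "weak_approx_identity_for csmul \<Phi> e f" "weak_approx_identity_for csmul \<Phi> e g"
  shows "weak_approx_identity_for csmul \<Phi> e (f + g)"
  using assms ai_commutes_add unfolding weak_approx_identity_for_def weak_approx_identity_def
  by blast

lemma weak_approx_identity_for_smul:
  assumes "weak_approx_identity_for csmul \<Phi> e f"
  shows "weak_approx_identity_for csmul \<Phi> e (smul a f)"
  using assms ai_commutes_smul unfolding weak_approx_identity_for_def weak_approx_identity_def
  by blast

lemma approx_identity_for_add:
  assumes "approx_identity_for csmul \<Phi> e f" "approx_identity_for csmul \<Phi> e g"
  shows "approx_identity_for csmul \<Phi> e (f + g)"
  using assms ai_commutes_add unfolding approx_identity_for_def approx_identity_def by blast

lemma approx_identity_for_smul:
  assumes "approx_identity_for csmul \<Phi> e f"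
  shows "approx_identity_for csmul \<Phi> e (smul a f)"
  using assms ai_commutes_smul unfolding approx_identity_for_def approx_identity_def by blast

lemma approx_identity_for_square:
  assumes "approx_identity_for csmul \<Phi> e f" "approx_identity_for csmul \<Phi> e g"
  shows "approx_identity_for csmul \<Phi> (\<lambda>n. e n * e n) (f * g)"
proof -
  have ai: "approx_identity csmul \<Phi> e"
    and f: "ai_commutes csmul \<Phi> e f" and g: "ai_commutes csmul \<Phi> e g"
    using assms unfolding approx_identity_for_def by blast+
  then have "\<And>n. bounded_op csmul (\<Phi> (e n))"
    unfolding approx_identity_def by blast
  then show ?thesis
    unfolding approx_identity_for_def
    using approx_identity_square[OF ai] ai_commutes_square f g by blast
qed

end

theorem theorem7p2:
  fixes csmul :: "complex \<Rightarrow> 'x::banach \<Rightarrow> 'x"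
    and smul :: "complex \<Rightarrow> 'f::comm_ring_1 \<Rightarrow> 'f"
    and \<Phi> :: "'f \<Rightarrow> ('x \<times> 'x) set"
  assumes X: "complex_banach csmul"
    and F: "comm_calgebra smul"
    and PC: "proto_calculus smul csmul \<Phi>"
  shows
    \<comment> \<open>(a), strong version\<close>
    "(\<forall>e f g. approx_identity_for csmul \<Phi> e f \<and> approx_identity_for csmul \<Phi> e g \<longrightarrow>
        approx_identity_for csmul \<Phi> e (f + g) \<and>
        (\<forall>a. approx_identity_for csmul \<Phi> e (smul a f)) \<and>
        closure (op_sum (\<Phi> f) (\<Phi> g)) = \<Phi> (f + g)) \<and>
     \<comment> \<open>(a), weak version\<close>
     (\<forall>e f g. weak_approx_identity_for csmul \<Phi> e f \<and> weak_approx_identity_for csmul \<Phi> e g \<longrightarrow>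
        weak_approx_identity_for csmul \<Phi> e (f + g) \<and>
        (\<forall>a. weak_approx_identity_for csmul \<Phi> e (smul a f)) \<and>
        closure (op_sum (\<Phi> f) (\<Phi> g)) = \<Phi> (f + g)) \<and>
     \<comment> \<open>(b)\<close>
     (\<forall>e f g. approx_identity_for csmul \<Phi> e f \<and> approx_identity_for csmul \<Phi> e g \<longrightarrow>
        approx_identity_for csmul \<Phi> (\<lambda>n. e n * e n) (f * g) \<and>
        closure (op_mult (\<Phi> f) (\<Phi> g)) = \<Phi> (f * g))"
proof -
  interpret proto_calc csmul smul \<Phi>
    using X F PC by (rule proto_calc.intro)
  have weak: "weak_approx_identity_for csmul \<Phi> e f" if "approx_identity_for csmul \<Phi> e f" for e f
    using that approx_identity_imp_weak
    unfolding approx_identity_for_def weak_approx_identity_for_def by blast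
  have "closure (op_sum (\<Phi> f) (\<Phi> g)) = \<Phi> (f + g)"
    if "approx_identity_for csmul \<Phi> e f" "approx_identity_for csmul \<Phi> e g" for e f g
    using closure_op_sum[OF weak[OF that(1)] weak[OF that(2)]] .
  then show ?thesis
    by (auto simp: closure_op_sum closure_op_mult
        intro: weak_approx_identity_for_add weak_approx_identity_for_smul
          approx_identity_for_add approx_identity_for_smul approx_identity_for_square)
qed

end
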